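(* Let $T$ be Takagi's function on $[0,1]$, $T(x)=\sum_{n=1}^\infty 2^{-n}\phi^{(n)}(x)$, with $\phi$ the tent map $\phi(x)=2x$ on $[0,1/2]$, $\phi(x)=2-2x$ on $[1/2,1]$. Let $x\in(0,1)$ be non-dyadic, with binary expansion $x=\sum_{k\ge1}2^{-k}\varepsilon_k$, and write $x=\sum_{n\ge1}2^{-a_n}$, $1-x=\sum_{n\ge1}2^{-b_n}$ with $\{a_n\},\{b_n\}$ strictly increasing sequences of positive integers. Suppose the limit $d_1(x):=\lim_{n\to\infty}\frac1n\sum_{k=1}^n\varepsilon_k$ exists. If either (a) $0<d_1(x)<1/2$, or (b) $d_1(x)=0$ and $\limsup_{n\to\infty}a_{n+1}/a_n<2$, then $T'(x)=+\infty$. If either (a) $1/2<d_1(x)<1$, or (b) $d_1(x)=1$ and $\limsup_{n\to\infty}b_{n+1}/b_n<2$, then $T'(x)=-\infty$.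
   Context: $T'(x)=\pm\infty$ means the two-sided limit $\lim_{h\to0}(T(x+h)-T(x))/h$ equals $\pm\infty$. A dyadic point is one of the form $k/2^m$. *)

theory Defs
  imports "HOL-Analysis.Analysis" "HOL-Library.Liminf_Limsup"
begin

definition tent :: "real \<Rightarrow> real" where
  "tent x = (if x \<le> 1/2 then 2 * x else 2 - 2 * x)"

definition takagi :: "real \<Rightarrow> real" where
  "takagi x = (\<Sum>n. (1/2) ^ Suc n * (tent ^^ Suc n) x)"

definition dyadic :: "real \<Rightarrow> bool" where
  "dyadic x \<longleftrightarrow> (\<exists>(k::int) (m::nat). x = real_of_int k / 2 ^ m)"

end

theory Submission
  imports Defs
begin

(* Iterating the functional equation takagi z = tent z / 2 + takagi (tent z) / 2 along the binary
   digits of x shows that, as long as x and x + h share their first n digits, the difference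
   takagi (x + h) - takagi x equals D_n h plus a remainder rescaled by 2^-n, where D_n counts
   zeros minus ones among these digits. At the first digit where x and x + h separate, the
   remainder is bounded below by estimates of takagi in terms of the balance of the subsequent
   digits. Hence the slope tends to +\<infinity> as soon as the balance eventually outgrows every run of
   zeros by an arbitrary margin; this follows from 0 < d < 1/2, and for d = 0 from the gap
   condition on the positions a_n of the ones. The case -\<infinity> follows from takagi (1 - x) = takagi x. *)

section \<open>Takagi's function\<close>

lemma tent_one_minus: "tent (1 - z) = tent z"
  unfolding tent_def by auto

lemma tent_iter_bounds: "0 \<le> z \<Longrightarrow> z \<le> 1 \<Longrightarrow> 0 \<le> (tent ^^ n) z \<and> (tent ^^ n) z \<le> 1"
  by (induction n) (auto simp: tent_def)

lemma summable_takagi_series: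
  assumes "0 \<le> z" "z \<le> 1"
  shows "summable (\<lambda>n. (1/2::real) ^ Suc n * (tent ^^ Suc n) z)"
proof (rule summable_comparison_test[where g = "\<lambda>n. (1/2::real) ^ Suc n"])
  show "\<exists>N. \<forall>n\<ge>N. norm ((1/2::real) ^ Suc n * (tent ^^ Suc n) z) \<le> (1/2) ^ Suc n"
    using tent_iter_bounds[OF assms, of "Suc n" for n] by (auto simp: abs_mult intro!: mult_left_le)
  show "summable (\<lambda>n. (1/2::real) ^ Suc n)"
    using power_half_series sums_summable by blast
qed

lemma takagi_bounds:
  assumes "0 \<le> z" "z \<le> 1"
  shows "0 \<le> takagi z \<and> takagi z \<le> 1"
proof
  show "0 \<le> takagi z" unfolding takagi_def
    using summable_takagi_series[OF assms] tent_iter_bounds[OF assms, of "Suc n" for n]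
    by (intro suminf_nonneg) auto
  have "takagi z \<le> (\<Sum>n. (1/2::real) ^ Suc n)" unfolding takagi_def
    using summable_takagi_series[OF assms] tent_iter_bounds[OF assms, of "Suc n" for n] power_half_series
    by (intro suminf_le) (auto intro!: mult_left_le sums_summable)
  thus "takagi z \<le> 1" using power_half_series sums_unique by fastforce
qed

lemma takagi_one_minus: "takagi (1 - z) = takagi z"
  unfolding takagi_def by (simp only: funpow_Suc_right o_def tent_one_minus)

lemma takagi_functional_equation:
  assumes "0 \<le> z" "z \<le> 1"
  shows "takagi z = tent z / 2 + takagi (tent z) / 2"
proof -
  let ?f = "\<lambda>n. (1/2::real) ^ Suc n * (tent ^^ Suc n) z"
  have "(\<Sum>n. ?f (Suc n)) = suminf ?f - ?f 0"
    by (rule suminf_split_head[OF summable_takagi_series[OF assms]])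
  moreover have "(\<lambda>n. ?f (Suc n)) = (\<lambda>n. (1/2) * ((1/2::real) ^ Suc n * (tent ^^ Suc n) (tent z)))"
    by (rule ext) (simp only: funpow_Suc_right[of "Suc _"] o_def power_Suc mult.assoc)
  moreover have "(\<Sum>n. (1/2) * ((1/2::real) ^ Suc n * (tent ^^ Suc n) (tent z))) = (1/2) * takagi (tent z)"
    unfolding takagi_def
    using summable_takagi_series tent_iter_bounds[OF assms, of 1] by (intro suminf_mult) auto
  ultimately have "takagi (tent z) / 2 = takagi z - tent z / 2"
    unfolding takagi_def by simp
  thus ?thesis by linarith
qed

lemma takagi_lower_half: "0 \<le> z \<Longrightarrow> z \<le> 1/2 \<Longrightarrow> takagi z = z + takagi (2 * z) / 2"
  using takagi_functional_equation[of z] by (simp add: tent_def)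

lemma takagi_upper_half:
  assumes "1/2 \<le> z" "z \<le> 1"
  shows "takagi z = (1 - z) + takagi (2 * z - 1) / 2"
proof (cases "z = 1/2")
  case True
  thus ?thesis using takagi_lower_half[of "1/2"] takagi_one_minus[of 0] by (simp add: True)
next
  case False
  thus ?thesis
    using assms takagi_functional_equation[of z] takagi_one_minus[of "2 * z - 1"] by (auto simp: tent_def)
qed

lemma takagi_le_near_zero:
  "0 \<le> s \<Longrightarrow> s \<le> (1/2) ^ k \<Longrightarrow> takagi s \<le> real k * s + (1/2) ^ k"
proof (induction k arbitrary: s)
  case 0
  thus ?case using takagi_bounds[of s] by simp
next
  case (Suc k)
  have "(1/2::real) ^ k \<le> 1" by (rule power_le_one) auto
  hence "s \<le> 1/2" using Suc.prems(2) by simp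
  moreover have "takagi (2 * s) \<le> real k * (2 * s) + (1/2) ^ k"
    using Suc.IH[of "2 * s"] Suc.prems by simp
  ultimately show ?case using takagi_lower_half[of s] Suc.prems by (simp add: algebra_simps)
qed

section \<open>The doubling map and the digit balance\<close>

text \<open>The binary digits of \<open>w\<close> are read off the orbit of \<open>w\<close> under the doubling map:
  the digit \<open>k + 1\<close> is 0 iff \<open>doubling_orbit w k < 1/2\<close>. The balance counts zeros minus ones
  among the first \<open>n\<close> digits and is the slope of the \<open>n\<close>-th partial sum of Takagi's series near \<open>w\<close>.\<close>

definition doubling :: "real \<Rightarrow> real" where
  "doubling z = (if z < 1/2 then 2 * z else 2 * z - 1)"

definition doubling_orbit :: "real \<Rightarrow> nat \<Rightarrow> real" where
  "doubling_orbit w n = (doubling ^^ n) w"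

definition half_sign :: "real \<Rightarrow> real" where
  "half_sign z = (if z < 1/2 then 1 else -1)"

definition digit_balance :: "real \<Rightarrow> nat \<Rightarrow> real" where
  "digit_balance w n = (\<Sum>k<n. half_sign (doubling_orbit w k))"

definition nondyadic_orbit :: "real \<Rightarrow> bool" where
  "nondyadic_orbit w \<longleftrightarrow>
     (\<forall>k. 0 < doubling_orbit w k \<and> doubling_orbit w k < 1 \<and> doubling_orbit w k \<noteq> 1/2)"

definition same_half :: "real \<Rightarrow> real \<Rightarrow> bool" where
  "same_half z y \<longleftrightarrow> (z < 1/2 \<and> 0 \<le> y \<and> y \<le> 1/2) \<or> (1/2 < z \<and> 1/2 \<le> y \<and> y \<le> 1)"

lemma doubling_orbit_0 [simp]: "doubling_orbit w 0 = w"
  by (simp add: doubling_orbit_def)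

lemma doubling_orbit_Suc: "doubling_orbit w (Suc n) = doubling (doubling_orbit w n)"
  by (simp add: doubling_orbit_def)

lemma doubling_orbit_Suc': "doubling_orbit w (Suc n) = doubling_orbit (doubling w) n"
  by (simp only: doubling_orbit_def funpow_Suc_right o_def)

lemma doubling_orbit_add: "doubling_orbit w (m + n) = doubling_orbit (doubling_orbit w m) n"
  by (simp only: doubling_orbit_def add.commute[of m n] funpow_add o_def)

lemma digit_balance_0 [simp]: "digit_balance w 0 = 0"
  by (simp add: digit_balance_def)

lemma digit_balance_Suc: "digit_balance w (Suc n) = digit_balance w n + half_sign (doubling_orbit w n)"
  by (simp add: digit_balance_def)

lemma digit_balance_Suc': "digit_balance w (Suc n) = half_sign w + digit_balance (doubling w) n"
  unfolding digit_balance_def sum.lessThan_Suc_shift by (simp add: doubling_orbit_Suc')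

lemma digit_balance_add:
  "digit_balance w (m + n) = digit_balance w m + digit_balance (doubling_orbit w m) n"
  by (induction n) (simp_all add: digit_balance_Suc doubling_orbit_add)

lemma digit_balance_zero_run:
  "(\<forall>i<q. doubling_orbit w (m + i) < 1/2) \<Longrightarrow> digit_balance w (m + q) = digit_balance w m + real q"
  by (induction q) (simp_all add: digit_balance_Suc half_sign_def)

lemma nondyadic_orbit_doubling_orbit: "nondyadic_orbit w \<Longrightarrow> nondyadic_orbit (doubling_orbit w m)"
  unfolding nondyadic_orbit_def by (simp add: doubling_orbit_add[symmetric])

lemma nondyadic_orbit_doubling: "nondyadic_orbit w \<Longrightarrow> nondyadic_orbit (doubling w)"
  using nondyadic_orbit_doubling_orbit[of w 1] by (simp add: doubling_orbit_def)

lemma nondyadic_orbitD: "nondyadic_orbit w \<Longrightarrow> 0 < w \<and> w < 1 \<and> w \<noteq> 1/2"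
  unfolding nondyadic_orbit_def using doubling_orbit_0 by metis

lemma doubling_orbit_le: "doubling_orbit w q \<le> 2 ^ q * w"
  by (induction q) (auto simp: doubling_orbit_Suc doubling_def)

lemma half_power_less_of_doubling_orbit:
  assumes "1/2 < doubling_orbit w q"
  shows "(1/2) ^ Suc q < w"
proof -
  have "1/2 < 2 ^ q * w" using assms doubling_orbit_le[of w q] by simp
  thus ?thesis by (simp add: field_simps power_one_over)
qed

lemma nondyadic_orbit_reaches_upper_half:
  assumes "nondyadic_orbit w"
  shows "\<exists>q. 1/2 < doubling_orbit w q"
proof (rule ccontr)
  assume "\<not> ?thesis"
  hence lower: "doubling_orbit w q < 1/2" for q
    using assms unfolding nondyadic_orbit_def by (meson linorder_neqE_linordered_idom)
  have doubled: "doubling_orbit w q = 2 ^ q * w" for q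
  proof (induction q)
    case (Suc q)
    thus ?case using lower[of q] by (simp add: doubling_orbit_Suc doubling_def)
  qed simp
  obtain q where "1 / w < 2 ^ q" using real_arch_pow[of 2 "1/w"] by auto
  hence "1 < 2 ^ q * w" using nondyadic_orbitD[OF assms] by (simp add: field_simps)
  thus False using lower[of q] doubled[of q] by simp
qed

text \<open>As long as the perturbed orbit \<open>doubling_orbit w k + 2^k * h\<close> stays in the same half as the
  orbit, each application of the functional equation contributes \<open>\<plusminus>h\<close>.\<close>

lemma takagi_diff_via_balance:
  assumes "nondyadic_orbit w"
    and "\<forall>k<n. same_half (doubling_orbit w k) (doubling_orbit w k + 2 ^ k * h)"
  shows "takagi (w + h) - takagi w = digit_balance w n * h +
    (takagi (doubling_orbit w n + 2 ^ n * h) - takagi (doubling_orbit w n)) / 2 ^ n"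
  using assms
proof (induction n arbitrary: w h)
  case 0
  thus ?case by simp
next
  case (Suc n)
  let ?r = "takagi (doubling_orbit w (Suc n) + 2 ^ Suc n * h) - takagi (doubling_orbit w (Suc n))"
  have same: "same_half w (w + h)" using Suc.prems(2) by force
  have "\<forall>k<n. same_half (doubling_orbit (doubling w) k) (doubling_orbit (doubling w) k + 2 ^ k * (2 * h))"
    using Suc.prems(2) by (auto simp: doubling_orbit_Suc'[symmetric] mult_ac)
  from Suc.IH[OF nondyadic_orbit_doubling[OF Suc.prems(1)] this]
  have IH: "takagi (doubling w + 2 * h) - takagi (doubling w) = digit_balance (doubling w) n * (2 * h) + ?r / 2 ^ n"
    by (simp add: doubling_orbit_Suc' mult_ac)
  have w: "0 < w" "w < 1" "w \<noteq> 1/2" using nondyadic_orbitD[OF Suc.prems(1)] by auto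
  have "takagi (w + h) - takagi w = half_sign w * h + (takagi (doubling w + 2 * h) - takagi (doubling w)) / 2"
  proof (cases "w < 1/2")
    case True
    hence "0 \<le> w + h" "w + h \<le> 1/2" using same unfolding same_half_def by auto
    hence "takagi (w + h) = (w + h) + takagi (doubling w + 2 * h) / 2"
      using takagi_lower_half[of "w + h"] True by (simp add: doubling_def distrib_left)
    moreover have "takagi w = w + takagi (doubling w) / 2"
      using takagi_lower_half[of w] True w by (simp add: doubling_def)
    ultimately show ?thesis using True by (simp add: half_sign_def diff_divide_distrib)
  next
    case False
    hence "1/2 \<le> w + h" "w + h \<le> 1" using same w unfolding same_half_def by auto
    hence "takagi (w + h) = (1 - (w + h)) + takagi (doubling w + 2 * h) / 2"
      using takagi_upper_half[of "w + h"] False by (simp add: doubling_def algebra_simps)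
    moreover have "takagi w = (1 - w) + takagi (doubling w) / 2"
      using takagi_upper_half[of w] False w by (simp add: doubling_def)
    ultimately show ?thesis using False by (simp add: half_sign_def diff_divide_distrib)
  qed
  thus ?case unfolding IH digit_balance_Suc' by (simp add: field_simps)
qed

lemma le_half_power_SucI: "A \<le> (1/2::real) ^ n \<Longrightarrow> X \<le> A / 2 \<Longrightarrow> X \<le> (1/2) ^ Suc n"
  by simp

text \<open>Both bounds are obtained from the functional equation applied \<open>n\<close> times, with an error of
  \<open>(1/2)^n\<close>; when the digit is 1 the balance lower bound \<open>I \<le> 0\<close> absorbs the extra term.\<close>

lemma takagi_ge_of_balance_ge_approx:
  "nondyadic_orbit w \<Longrightarrow> \<forall>j. I \<le> digit_balance w j \<Longrightarrow> (I + 1) * w - takagi w \<le> (1/2) ^ n"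
proof (induction n arbitrary: w I)
  case 0
  have "I \<le> 0" using "0.prems"(2) by (metis digit_balance_0)
  moreover have "0 < w" "w < 1" using nondyadic_orbitD[OF "0.prems"(1)] by auto
  ultimately have "(I + 1) * w \<le> 1" by (smt (verit) mult_left_le mult_nonpos_nonneg)
  thus ?case using takagi_bounds[of w] \<open>0 < w\<close> \<open>w < 1\<close> by simp
next
  case (Suc n)
  have I: "I \<le> 0" using Suc.prems(2) by (metis digit_balance_0)
  have w: "0 < w" "w < 1" "w \<noteq> 1/2" using nondyadic_orbitD[OF Suc.prems(1)] by auto
  have next_orbit: "nondyadic_orbit (doubling w)" by (rule nondyadic_orbit_doubling[OF Suc.prems(1)])
  have next_balance: "\<forall>j. I - half_sign w \<le> digit_balance (doubling w) j"
    using Suc.prems(2) digit_balance_Suc' by (metis add.commute diff_le_eq)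
  show ?case
  proof (cases "w < 1/2")
    case True
    have "I * (2 * w) - takagi (2 * w) \<le> (1/2) ^ n"
      using Suc.IH[OF next_orbit next_balance] True by (simp add: doubling_def half_sign_def)
    moreover have "(I + 1) * w - takagi w \<le> (I * (2 * w) - takagi (2 * w)) / 2"
      using takagi_lower_half[of w] True w by (simp add: field_simps)
    ultimately show ?thesis by (rule le_half_power_SucI)
  next
    case False
    have "(2 + I) * (2 * w - 1) - takagi (2 * w - 1) \<le> (1/2) ^ n"
      using Suc.IH[OF next_orbit next_balance] False by (simp add: doubling_def half_sign_def)
    moreover have "(I + 1) * w - takagi w \<le> ((2 + I) * (2 * w - 1) - takagi (2 * w - 1)) / 2"
      using takagi_upper_half[of w] False w I by (simp add: field_simps)
    ultimately show ?thesis by (rule le_half_power_SucI)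
  qed
qed

lemma takagi_ge_of_balance_ge:
  "nondyadic_orbit w \<Longrightarrow> \<forall>j. I \<le> digit_balance w j \<Longrightarrow> (I + 1) * w \<le> takagi w"
  using LIMSEQ_le_const[OF LIMSEQ_power_zero[of "1/2::real"], of "(I + 1) * w - takagi w"]
    takagi_ge_of_balance_ge_approx by force

lemma takagi_le_of_balance_ge_approx:
  "nondyadic_orbit w \<Longrightarrow> \<forall>j. I \<le> digit_balance w j \<Longrightarrow> takagi w - (1 - I) * (1 - w) \<le> (1/2) ^ n"
proof (induction n arbitrary: w I)
  case 0
  have "I \<le> 0" using "0.prems"(2) by (metis digit_balance_0)
  moreover have "0 < w" "w < 1" using nondyadic_orbitD[OF "0.prems"(1)] by auto
  ultimately have "0 \<le> (1 - I) * (1 - w)" by simp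
  thus ?case using takagi_bounds[of w] \<open>0 < w\<close> \<open>w < 1\<close> by simp
next
  case (Suc n)
  have I: "I \<le> 0" using Suc.prems(2) by (metis digit_balance_0)
  have w: "0 < w" "w < 1" "w \<noteq> 1/2" using nondyadic_orbitD[OF Suc.prems(1)] by auto
  have next_orbit: "nondyadic_orbit (doubling w)" by (rule nondyadic_orbit_doubling[OF Suc.prems(1)])
  have next_balance: "\<forall>j. I - half_sign w \<le> digit_balance (doubling w) j"
    using Suc.prems(2) digit_balance_Suc' by (metis add.commute diff_le_eq)
  show ?case
  proof (cases "w < 1/2")
    case True
    have "takagi (2 * w) - (2 - I) * (1 - 2 * w) \<le> (1/2) ^ n"
      using Suc.IH[OF next_orbit next_balance] True by (simp add: doubling_def half_sign_def)
    moreover have "takagi w - (1 - I) * (1 - w) \<le> (takagi (2 * w) - (2 - I) * (1 - 2 * w)) / 2"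
      using takagi_lower_half[of w] True w I by (simp add: field_simps)
    ultimately show ?thesis by (rule le_half_power_SucI)
  next
    case False
    have "takagi (2 * w - 1) - (- I) * (2 - 2 * w) \<le> (1/2) ^ n"
      using Suc.IH[OF next_orbit next_balance] False by (simp add: doubling_def half_sign_def)
    moreover have "takagi w - (1 - I) * (1 - w) \<le> (takagi (2 * w - 1) - (- I) * (2 - 2 * w)) / 2"
      using takagi_upper_half[of w] False w by (simp add: field_simps)
    ultimately show ?thesis by (rule le_half_power_SucI)
  qed
qed

lemma takagi_le_of_balance_ge:
  "nondyadic_orbit w \<Longrightarrow> \<forall>j. I \<le> digit_balance w j \<Longrightarrow> takagi w \<le> (1 - I) * (1 - w)"
  using LIMSEQ_le_const[OF LIMSEQ_power_zero[of "1/2::real"], of "takagi w - (1 - I) * (1 - w)"]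
    takagi_le_of_balance_ge_approx by force

section \<open>Difference quotients\<close>

lemma dyadic_bracket:
  assumes "0 < t" "t \<le> (1::real)"
  obtains k where "(1/2) ^ Suc k < t" "t \<le> (1/2) ^ k"
proof -
  obtain n where "1 / t < 2 ^ n" using real_arch_pow[of 2 "1/t"] by auto
  hence "\<exists>n. (1/2::real) ^ n < t" using assms by (auto simp: field_simps power_one_over)
  hence least: "(1/2::real) ^ (LEAST n. (1/2::real) ^ n < t) < t" by (rule LeastI_ex)
  then obtain k where k: "(LEAST n. (1/2::real) ^ n < t) = Suc k"
    using assms by (metis not0_implies_Suc not_less power_0)
  have "\<not> (1/2::real) ^ k < t" using not_less_Least[of k "\<lambda>n. (1/2::real) ^ n < t"] k by simp
  thus ?thesis using that least k by simp
qed

lemma half_power_bracket_estimate: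
  fixes \<beta> :: real
  assumes "(1/2) ^ Suc k < 2 * \<beta>" "2 * \<beta> \<le> (1/2) ^ k"
  shows "(1/2) ^ Suc k + (real k - 1 - real R) * \<beta> \<le> (1/2) ^ Suc R"
proof -
  consider "k < R" | "k = R" | "R < k" by linarith
  thus ?thesis
  proof cases
    case 1
    hence "(real k - 1 - real R) * \<beta> \<le> -2 * \<beta>"
      using assms by (intro mult_right_mono) (auto simp: zero_less_mult_iff)
    thus ?thesis using assms(1) zero_less_power[of "1/2::real" "Suc R"] by linarith
  next
    case 2
    have "0 < \<beta>" using assms(1) zero_less_power[of "1/2::real" "Suc k"] by linarith
    thus ?thesis using 2 by (simp add: algebra_simps)
  next
    case 3
    define j where "j = k - R"
    have k: "k = R + j" and j: "1 \<le> j" using 3 unfolding j_def by auto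
    have "(real k - 1 - real R) * \<beta> \<le> (real j - 1) * (1/2) ^ Suc k"
      using assms j unfolding k by (intro mult_mono) auto
    hence "(1/2) ^ Suc k + (real k - 1 - real R) * \<beta> \<le> real j * (1/2) ^ Suc j * (1/2) ^ R"
      unfolding k by (simp add: power_add algebra_simps)
    also have "real j * (1/2) ^ Suc j \<le> 2 ^ j * (1/2::real) ^ Suc j"
      using of_nat_less_two_power[of j] by (intro mult_right_mono) auto
    also have "2 ^ j * (1/2::real) ^ Suc j = 1/2" by (simp add: power_one_over)
    finally show ?thesis by simp
  qed
qed

text \<open>In the next two lemmas \<open>B\<close> plays the role of a lower bound for the balance after \<open>u\<close>, measured
  relative to the balance accumulated before \<open>u\<close>.\<close>

lemma takagi_slope_ge_upward:
  assumes u: "0 < u" "u < 1/2" and orbit: "nondyadic_orbit (2 * u)" and v: "1/2 < v" "v \<le> 1"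
    and B: "B \<le> 0" "\<forall>j. B - 1 \<le> digit_balance (2 * u) j"
  shows "B - 1 \<le> (takagi v - takagi u) / (v - u)"
proof -
  have "takagi (2 * u) \<le> (2 - B) * (1 - 2 * u)"
    using takagi_le_of_balance_ge[OF orbit B(2)] by simp
  moreover have "(2 - B) * (1 - 2 * u) = 2 - 4 * u - B + 2 * (B * u)" by (simp add: algebra_simps)
  moreover have "takagi u = u + takagi (2 * u) / 2" using takagi_lower_half[of u] u by simp
  ultimately have "takagi u \<le> 1 - u - B / 2 + B * u" by linarith
  moreover have "1 - v \<le> takagi v"
    using takagi_upper_half[of v] takagi_bounds[of "2 * v - 1"] v by simp
  moreover have "B * (v - 1/2) \<le> 0" using B v by (simp add: mult_nonpos_nonneg)
  hence "B * v \<le> B / 2" by (simp add: algebra_simps)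
  moreover have "(B - 1) * (v - u) = B * v - B * u - v + u" by (simp add: algebra_simps)
  ultimately have "(B - 1) * (v - u) \<le> takagi v - takagi u" by linarith
  thus ?thesis using u v by (simp add: pos_le_divide_eq)
qed

lemma takagi_slope_ge_downward:
  assumes u: "1/2 < u" "u < 1" and orbit: "nondyadic_orbit (2 * u - 1)" and v: "0 \<le> v" "v < 1/2"
    and B: "B \<le> 0" "\<forall>j. B + 1 \<le> digit_balance (2 * u - 1) j"
    and R: "(1/2) ^ Suc R \<le> u - 1/2"
  shows "B - real R \<le> (takagi v - takagi u) / (v - u)"
proof -
  define \<alpha> where "\<alpha> = u - 1/2"
  define \<beta> where "\<beta> = 1/2 - v"
  have \<beta>: "0 < \<beta>" "2 * \<beta> \<le> 1" using v unfolding \<beta>_def by auto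
  obtain k where k: "(1/2) ^ Suc k < 2 * \<beta>" "2 * \<beta> \<le> (1/2) ^ k"
    using dyadic_bracket[of "2 * \<beta>"] \<beta> by auto
  have "takagi (2 * \<beta>) \<le> real k * (2 * \<beta>) + (1/2) ^ k"
    using takagi_le_near_zero[of "2 * \<beta>" k] k \<beta> by simp
  moreover have "2 * \<beta> = 1 - 2 * v" unfolding \<beta>_def by simp
  hence "takagi (2 * \<beta>) = takagi (2 * v)" using takagi_one_minus[of "2 * v"] by simp
  moreover have "takagi v = v + takagi (2 * v) / 2" using takagi_lower_half[of v] v by simp
  moreover have "v = 1/2 - \<beta>" "real k * (2 * \<beta>) = 2 * (real k * \<beta>)" "(1/2::real) ^ Suc k = (1/2) ^ k / 2"
    unfolding \<beta>_def by simp_all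
  ultimately have Tv: "takagi v \<le> 1/2 - \<beta> + real k * \<beta> + (1/2) ^ Suc k" by linarith
  have "(B + 2) * (2 * u - 1) \<le> takagi (2 * u - 1)"
    using takagi_ge_of_balance_ge[OF orbit B(2)] by (simp add: add.commute)
  moreover have "(B + 2) * (2 * u - 1) = 2 * ((B + 2) * \<alpha>)" unfolding \<alpha>_def by (simp add: algebra_simps)
  moreover have "takagi u = (1 - u) + takagi (2 * u - 1) / 2" using takagi_upper_half[of u] u by simp
  ultimately have Tu: "1/2 - \<alpha> + (B + 2) * \<alpha> \<le> takagi u" unfolding \<alpha>_def by linarith
  have "(1/2) ^ Suc k + (real k - 1 + B - real R) * \<beta> \<le> (1/2) ^ Suc k + (real k - 1 - real R) * \<beta>"
    using B \<beta> by (intro add_left_mono mult_right_mono) auto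
  also have "\<dots> \<le> (1/2) ^ Suc R" by (rule half_power_bracket_estimate[OF k])
  also have "\<dots> \<le> \<alpha>" using R unfolding \<alpha>_def .
  also have "\<dots> \<le> (real R + 1) * \<alpha>" using u unfolding \<alpha>_def by (simp add: distrib_right)
  finally have key: "(1/2) ^ Suc k + (real k - 1 + B - real R) * \<beta> \<le> (real R + 1) * \<alpha>" .
  have "(1/2 - \<alpha> + (B + 2) * \<alpha>) - (1/2 - \<beta> + real k * \<beta> + (1/2) ^ Suc k) - (B - real R) * (\<alpha> + \<beta>)
      = (real R + 1) * \<alpha> - ((1/2) ^ Suc k + (real k - 1 + B - real R) * \<beta>)"
    by (simp add: algebra_simps)
  hence "(B - real R) * (u - v) \<le> takagi u - takagi v"
    using Tu Tv key unfolding \<alpha>_def \<beta>_def by (smt (verit))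
  hence "B - real R \<le> (takagi u - takagi v) / (u - v)" using u v by (simp add: pos_le_divide_eq)
  thus ?thesis by (metis minus_diff_eq minus_divide_divide)
qed

lemma same_half_doubling:
  "same_half z (z + d) \<Longrightarrow> 0 \<le> doubling z + 2 * d \<and> doubling z + 2 * d \<le> 1"
  unfolding same_half_def doubling_def by auto

lemma same_half_dist: "same_half z y \<Longrightarrow> 0 \<le> z \<Longrightarrow> z \<le> 1 \<Longrightarrow> \<bar>y - z\<bar> \<le> 1/2"
  unfolding same_half_def by (auto simp: abs_if)

lemma eventually_same_half_upto:
  assumes "nondyadic_orbit x"
  shows "\<forall>\<^sub>F h in at 0. \<forall>k\<in>{..N}. same_half (doubling_orbit x k) (doubling_orbit x k + 2 ^ k * h)"
proof (rule eventually_ball_finite)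
  show "\<forall>k\<in>{..N}. \<forall>\<^sub>F h in at 0. same_half (doubling_orbit x k) (doubling_orbit x k + 2 ^ k * h)"
  proof
    fix k
    let ?z = "doubling_orbit x k"
    let ?U = "if ?z < 1/2 then {0<..<1/2} else {1/2<..<1::real}"
    have z: "0 < ?z" "?z < 1" "?z \<noteq> 1/2" using assms unfolding nondyadic_orbit_def by auto
    have "((\<lambda>h. ?z + 2 ^ k * h) \<longlongrightarrow> ?z) (at 0)" by (intro tendsto_eq_intros) auto
    moreover have "open ?U" "?z \<in> ?U" using z by auto
    ultimately have "\<forall>\<^sub>F h in at 0. ?z + 2 ^ k * h \<in> ?U" by (rule topological_tendstoD)
    thus "\<forall>\<^sub>F h in at 0. same_half ?z (?z + 2 ^ k * h)"
      by eventually_elim (use z in \<open>auto simp: same_half_def split: if_splits\<close>)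
  qed
qed simp

lemma exists_first_exit:
  assumes x: "nondyadic_orbit x" and h: "h \<noteq> 0"
  obtains m where "\<forall>k<m. same_half (doubling_orbit x k) (doubling_orbit x k + 2 ^ k * h)"
    and "\<not> same_half (doubling_orbit x m) (doubling_orbit x m + 2 ^ m * h)"
proof -
  let ?S = "\<lambda>k. same_half (doubling_orbit x k) (doubling_orbit x k + 2 ^ k * h)"
  obtain k where "1 / \<bar>h\<bar> < 2 ^ k" using real_arch_pow[of 2 "1 / \<bar>h\<bar>"] by auto
  hence "1 < 2 ^ k * \<bar>h\<bar>" using h by (simp add: field_simps)
  moreover have "0 \<le> doubling_orbit x k" "doubling_orbit x k \<le> 1"
    using x unfolding nondyadic_orbit_def by (auto simp: less_imp_le)
  ultimately have "\<not> ?S k" using same_half_dist by (fastforce simp: abs_mult)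
  hence "\<exists>k. \<not> ?S k" by blast
  from LeastI_ex[OF this] not_less_Least[of _ "\<lambda>k. \<not> ?S k"] show ?thesis using that by blast
qed

lemma takagi_slope_ge_exit_upward:
  assumes x: "nondyadic_orbit x" and u: "doubling_orbit x m < 1/2" and v: "1/2 < v" "v \<le> 1"
    and runs: "\<forall>j\<ge>m. G \<le> digit_balance x j"
  shows "G - digit_balance x m - 1 \<le> (takagi v - takagi (doubling_orbit x m)) / (v - doubling_orbit x m)"
proof -
  let ?u = "doubling_orbit x m"
  have next_orbit: "doubling_orbit x (Suc m) = 2 * ?u"
    using u by (simp add: doubling_orbit_Suc doubling_def)
  have split: "digit_balance x (Suc m + j) = digit_balance x m + 1 + digit_balance (2 * ?u) j" for j
    using digit_balance_add[of x "Suc m" j] digit_balance_Suc[of x m] u next_orbit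
    by (simp add: half_sign_def)
  have "\<forall>j. G - digit_balance x m - 1 \<le> digit_balance (2 * ?u) j"
  proof
    fix j
    have "G \<le> digit_balance x (Suc m + j)" using runs by simp
    thus "G - digit_balance x m - 1 \<le> digit_balance (2 * ?u) j" using split[of j] by linarith
  qed
  moreover have "G - digit_balance x m \<le> 0" using runs by simp
  moreover have "nondyadic_orbit (2 * ?u)"
    using nondyadic_orbit_doubling_orbit[OF x, of "Suc m"] next_orbit by simp
  moreover have "0 < ?u" using x unfolding nondyadic_orbit_def by blast
  ultimately show ?thesis using takagi_slope_ge_upward[OF _ u _ v] by simp
qed

lemma takagi_slope_ge_exit_downward:
  assumes x: "nondyadic_orbit x" and u: "1/2 < doubling_orbit x m" and v: "0 \<le> v" "v < 1/2"
    and runs: "\<And>q. \<forall>i<q. doubling_orbit x (Suc m + i) < 1/2 \<Longrightarrow> \<forall>j\<ge>Suc m. G + real q \<le> digit_balance x j"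
  shows "G - digit_balance x m - 1 \<le> (takagi v - takagi (doubling_orbit x m)) / (v - doubling_orbit x m)"
proof -
  let ?u = "doubling_orbit x m"
  define w where "w = doubling_orbit x (Suc m)"
  have w: "w = 2 * ?u - 1" unfolding w_def using u by (simp add: doubling_orbit_Suc doubling_def)
  have w_orbit: "nondyadic_orbit w" unfolding w_def by (rule nondyadic_orbit_doubling_orbit[OF x])
  define q where "q = (LEAST q. 1/2 < doubling_orbit w q)"
  have q: "1/2 < doubling_orbit w q"
    unfolding q_def using LeastI_ex[OF nondyadic_orbit_reaches_upper_half[OF w_orbit]] .
  have "doubling_orbit w i < 1/2" if "i < q" for i
  proof -
    have "\<not> 1/2 < doubling_orbit w i"
      using not_less_Least[of i "\<lambda>q. 1/2 < doubling_orbit w q"] that unfolding q_def by blast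
    moreover have "doubling_orbit w i \<noteq> 1/2" using w_orbit unfolding nondyadic_orbit_def by blast
    ultimately show ?thesis by linarith
  qed
  hence after: "\<forall>j\<ge>Suc m. G + real q \<le> digit_balance x j"
    by (intro runs) (simp add: w_def doubling_orbit_add[symmetric])
  have split: "digit_balance x (Suc m + j) = digit_balance x m - 1 + digit_balance w j" for j
    using digit_balance_add[of x "Suc m" j] digit_balance_Suc[of x m] u unfolding w_def
    by (simp add: half_sign_def)
  have bal: "G + real q \<le> digit_balance x m - 1 + digit_balance w j" for j
    using after[rule_format, of "Suc m + j"] split[of j] by simp
  have "(1/2) ^ Suc (Suc q) \<le> ?u - 1/2"
    using half_power_less_of_doubling_orbit[OF q] w by simp
  moreover have "G + real q - digit_balance x m \<le> 0" using bal[of 0] by simp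
  moreover have "\<forall>j. G + real q - digit_balance x m + 1 \<le> digit_balance (2 * ?u - 1) j"
    using bal w by (simp add: algebra_simps)
  moreover have "?u < 1" using x unfolding nondyadic_orbit_def by blast
  ultimately show ?thesis
    using takagi_slope_ge_downward[OF u _ _ v, of "G + real q - digit_balance x m" "Suc q"] w_orbit w
    by (simp add: algebra_simps)
qed

lemma takagi_slope_ge_at_exit:
  assumes x: "nondyadic_orbit x" and h: "h \<noteq> 0"
    and stay: "\<forall>k<Suc m. same_half (doubling_orbit x k) (doubling_orbit x k + 2 ^ k * h)"
    and exit: "\<not> same_half (doubling_orbit x (Suc m)) (doubling_orbit x (Suc m) + 2 ^ Suc m * h)"
    and runs: "\<And>n q. Suc m \<le> n \<Longrightarrow> \<forall>i<q. doubling_orbit x (n + i) < 1/2 \<Longrightarrow>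
      \<forall>j\<ge>n. G + real q \<le> digit_balance x j"
  shows "G - 1 \<le> (takagi (x + h) - takagi x) / h"
proof -
  define u where "u = doubling_orbit x (Suc m)"
  define v where "v = doubling_orbit x (Suc m) + 2 ^ Suc m * h"
  have u: "0 < u" "u < 1" "u \<noteq> 1/2" using x unfolding nondyadic_orbit_def u_def by blast+
  have "v = doubling (doubling_orbit x m) + 2 * (2 ^ m * h)"
    unfolding v_def by (simp add: doubling_orbit_Suc)
  hence v: "0 \<le> v" "v \<le> 1" using same_half_doubling[of _ "2 ^ m * h"] stay by auto
  have "takagi (x + h) - takagi x = digit_balance x (Suc m) * h + (takagi v - takagi u) / 2 ^ Suc m"
    using takagi_diff_via_balance[OF x stay] unfolding u_def v_def .
  hence "(takagi (x + h) - takagi x) / h = digit_balance x (Suc m) + (takagi v - takagi u) / (2 ^ Suc m * h)"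
    using h by (simp add: add_divide_distrib divide_divide_eq_left mult.commute)
  moreover have "2 ^ Suc m * h = v - u" unfolding u_def v_def by simp
  ultimately have slope:
    "(takagi (x + h) - takagi x) / h = digit_balance x (Suc m) + (takagi v - takagi u) / (v - u)"
    by simp
  have "G - digit_balance x (Suc m) - 1 \<le> (takagi v - takagi u) / (v - u)"
  proof (cases "u < 1/2")
    case True
    hence "1/2 < v" using exit v unfolding same_half_def u_def v_def by auto
    thus ?thesis using takagi_slope_ge_exit_upward[OF x _ _ v(2)] True runs[of "Suc m" 0]
      unfolding u_def by simp
  next
    case False
    hence "v < 1/2" using exit u v unfolding same_half_def u_def v_def by auto
    moreover have "1/2 < doubling_orbit x (Suc m)" using False u unfolding u_def by auto
    moreover have "\<forall>j\<ge>Suc (Suc m). G + real q \<le> digit_balance x j"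
      if "\<forall>i<q. doubling_orbit x (Suc (Suc m) + i) < 1/2" for q
      using runs[of "Suc (Suc m)" q] that by simp
    ultimately show ?thesis using takagi_slope_ge_exit_downward[OF x _ v(1)] unfolding u_def by blast
  qed
  thus ?thesis unfolding slope by simp
qed

text \<open>Read in binary digits: eventually, a run of \<open>q\<close> zeros starting at a digit \<open>m\<close> is outweighed
  by the balance at every later digit, with any fixed margin \<open>M\<close> to spare.\<close>

definition balance_outgrows_zero_runs :: "real \<Rightarrow> bool" where
  "balance_outgrows_zero_runs x \<longleftrightarrow> (\<forall>M. \<exists>N. \<forall>m\<ge>N. \<forall>q.
     (\<forall>i<q. doubling_orbit x (m + i) < 1/2) \<longrightarrow> (\<forall>j\<ge>m. M + real q \<le> digit_balance x j))"

theorem takagi_slope_tendsto_at_top: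
  assumes x: "nondyadic_orbit x" and runs: "balance_outgrows_zero_runs x"
  shows "filterlim (\<lambda>h. (takagi (x + h) - takagi x) / h) at_top (at 0)"
  unfolding filterlim_at_top
proof
  fix Z :: real
  obtain N where N: "\<And>n q. N \<le> n \<Longrightarrow> \<forall>i<q. doubling_orbit x (n + i) < 1/2 \<Longrightarrow>
      \<forall>j\<ge>n. Z + 1 + real q \<le> digit_balance x j"
    using runs unfolding balance_outgrows_zero_runs_def by (metis (full_types))
  have "\<forall>\<^sub>F h in at 0. h \<noteq> 0" by (simp add: eventually_at_filter)
  with eventually_same_half_upto[OF x, of N]
  show "\<forall>\<^sub>F h in at 0. Z \<le> (takagi (x + h) - takagi x) / h"
  proof eventually_elim
    case (elim h)
    then obtain m where stay: "\<forall>k<m. same_half (doubling_orbit x k) (doubling_orbit x k + 2 ^ k * h)"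
      and exit: "\<not> same_half (doubling_orbit x m) (doubling_orbit x m + 2 ^ m * h)"
      using exists_first_exit[OF x] by blast
    have "N < m" using elim exit by (meson atMost_iff not_less)
    then obtain n where "m = Suc n" "N \<le> n" by (cases m) auto
    thus ?case using takagi_slope_ge_at_exit[OF x _ _ _ N, of h n] elim stay exit by simp
  qed
qed

section \<open>Binary expansions and digit densities\<close>

lemma doubling_orbit_eq_shift: "\<exists>j::int. doubling_orbit x k = 2 ^ k * x - of_int j"
proof (induction k)
  case 0
  show ?case by (intro exI[of _ 0]) simp
next
  case (Suc k)
  then obtain j :: int where "doubling_orbit x k = 2 ^ k * x - of_int j" by blast
  thus ?case unfolding doubling_orbit_Suc doubling_def
    by (intro exI[of _ "if doubling_orbit x k < 1/2 then 2 * j else 2 * j + 1"]) auto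
qed

lemma doubling_orbit_bounds: "0 \<le> x \<Longrightarrow> x < 1 \<Longrightarrow> 0 \<le> doubling_orbit x k \<and> doubling_orbit x k < 1"
  by (induction k) (auto simp: doubling_orbit_Suc doubling_def)

lemma nondyadic_orbit_of_not_dyadic:
  assumes x: "0 < x" "x < 1" and nd: "\<not> dyadic x"
  shows "nondyadic_orbit x"
  unfolding nondyadic_orbit_def
proof
  fix k
  obtain j :: int where j: "doubling_orbit x k = 2 ^ k * x - of_int j"
    using doubling_orbit_eq_shift by blast
  have "doubling_orbit x k \<noteq> 0"
  proof
    assume "doubling_orbit x k = 0"
    hence "x = of_int j / 2 ^ k" using j by (simp add: field_simps)
    thus False using nd unfolding dyadic_def by blast
  qed
  moreover have "doubling_orbit x k \<noteq> 1/2"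
  proof
    assume "doubling_orbit x k = 1/2"
    hence "x = of_int (2 * j + 1) / 2 ^ Suc k" using j by (simp add: field_simps)
    thus False using nd unfolding dyadic_def by blast
  qed
  ultimately show "0 < doubling_orbit x k \<and> doubling_orbit x k < 1 \<and> doubling_orbit x k \<noteq> 1/2"
    using doubling_orbit_bounds[of x k] x by auto
qed

lemma binary_digits_doubling:
  fixes c :: "nat \<Rightarrow> nat"
  assumes w: "nondyadic_orbit w" and c: "\<forall>k\<ge>1. c k \<in> {0, 1}"
    and sums: "(\<lambda>k. real (c (Suc k)) / 2 ^ Suc k) sums w"
  shows "(c 1 = 1 \<longleftrightarrow> 1/2 < w) \<and> (\<lambda>k. real (c (Suc (Suc k))) / 2 ^ Suc k) sums doubling w"
proof -
  let ?f = "\<lambda>k. real (c (Suc k)) / 2 ^ Suc k"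
  have "(\<lambda>k. 2 * ?f (Suc k)) sums (2 * (w - ?f 0))"
    using sums sums_Suc_iff[of ?f "w - ?f 0"] by (intro sums_mult) simp
  moreover have "(\<lambda>k. 2 * ?f (Suc k)) = (\<lambda>k. real (c (Suc (Suc k))) / 2 ^ Suc k)"
    by (rule ext) simp
  ultimately have tail: "(\<lambda>k. real (c (Suc (Suc k))) / 2 ^ Suc k) sums (2 * w - real (c 1))"
    by (simp add: algebra_simps)
  have "2 * w - real (c 1) \<le> 1"
  proof (rule sums_le[OF _ tail power_half_series])
    fix n
    have "real (c (Suc (Suc n))) \<le> 1" using c[rule_format, of "Suc (Suc n)"] by auto
    thus "real (c (Suc (Suc n))) / 2 ^ Suc n \<le> (1/2) ^ Suc n"
      by (simp add: power_one_over divide_right_mono)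
  qed
  moreover have "0 \<le> 2 * w - real (c 1)" by (rule sums_le[OF _ sums_zero tail]) simp
  moreover have "c 1 = 0 \<or> c 1 = 1" using c by auto
  ultimately show ?thesis using tail nondyadic_orbitD[OF w] by (auto simp: doubling_def)
qed

lemma binary_digit_iff_doubling_orbit:
  fixes c :: "nat \<Rightarrow> nat"
  assumes "nondyadic_orbit w" "\<forall>k\<ge>1. c k \<in> {0, 1}" "(\<lambda>k. real (c (Suc k)) / 2 ^ Suc k) sums w"
  shows "c (Suc k) = 1 \<longleftrightarrow> 1/2 < doubling_orbit w k"
  using assms
proof (induction k arbitrary: c w)
  case 0
  thus ?case using binary_digits_doubling[of w c] by simp
next
  case (Suc k)
  have "(\<lambda>k. real ((c \<circ> Suc) (Suc k)) / 2 ^ Suc k) sums doubling w"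
    using binary_digits_doubling[OF Suc.prems] by simp
  moreover have "\<forall>k\<ge>1. (c \<circ> Suc) k \<in> {0, 1}" using Suc.prems(2) by auto
  ultimately have "(c \<circ> Suc) (Suc k) = 1 \<longleftrightarrow> 1/2 < doubling_orbit (doubling w) k"
    using Suc.IH nondyadic_orbit_doubling[OF Suc.prems(1)] by blast
  thus ?case by (simp add: doubling_orbit_Suc')
qed

lemma range_iff_doubling_orbit:
  fixes a :: "nat \<Rightarrow> nat"
  assumes x: "nondyadic_orbit x" and a: "strict_mono a" "\<forall>n. 1 \<le> a n"
    and sums: "(\<lambda>n. (1/2) ^ a n) sums x"
  shows "Suc k \<in> range a \<longleftrightarrow> 1/2 < doubling_orbit x k"
proof -
  define c :: "nat \<Rightarrow> nat" where "c k = (if k \<in> range a then 1 else 0)" for k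
  define f :: "nat \<Rightarrow> real" where "f k = (if k \<in> range a then (1/2) ^ k else 0)" for k
  have "(\<lambda>n. f (a n)) sums x" using sums unfolding f_def by simp
  hence "f sums x" using sums_mono_reindex[OF a(1), of f x] unfolding f_def by auto
  moreover have "f 0 = 0" using a(2) unfolding f_def by (auto simp: image_iff Suc_le_eq)
  ultimately have "(\<lambda>k. f (Suc k)) sums x" using sums_Suc_iff[of f x] by simp
  moreover have "(\<lambda>k. f (Suc k)) = (\<lambda>k. real (c (Suc k)) / 2 ^ Suc k)"
    unfolding f_def c_def by (auto simp: power_one_over)
  ultimately have "(\<lambda>k. real (c (Suc k)) / 2 ^ Suc k) sums x" by simp
  hence "c (Suc k) = 1 \<longleftrightarrow> 1/2 < doubling_orbit x k"
    by (intro binary_digit_iff_doubling_orbit[OF x]) (auto simp: c_def)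
  thus ?thesis unfolding c_def by (auto split: if_splits)
qed

lemma digit_balance_eq_digit_sum:
  fixes e :: "nat \<Rightarrow> nat"
  assumes x: "nondyadic_orbit x" and e: "\<forall>k\<ge>1. e k \<in> {0, 1}"
    and digits: "\<And>k. e (Suc k) = 1 \<longleftrightarrow> 1/2 < doubling_orbit x k"
  shows "digit_balance x n = real n - 2 * (\<Sum>k=1..n. real (e k))"
proof (induction n)
  case (Suc n)
  have "doubling_orbit x n \<noteq> 1/2" using x unfolding nondyadic_orbit_def by auto
  moreover have "e (Suc n) = 0 \<or> e (Suc n) = 1" using e by auto
  ultimately have "half_sign (doubling_orbit x n) = 1 - 2 * real (e (Suc n))"
    using digits[of n] unfolding half_sign_def by auto
  thus ?case using Suc by (simp add: digit_balance_Suc algebra_simps)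
qed simp

lemma ratio_limit_bounds:
  fixes f :: "nat \<Rightarrow> real"
  assumes "(\<lambda>n. f n / real n) \<longlonglongrightarrow> L" "0 < \<eta>"
  obtains N where "\<And>n. N \<le> n \<Longrightarrow> (L - \<eta>) * real n \<le> f n \<and> f n \<le> (L + \<eta>) * real n"
proof -
  obtain N where N: "\<And>n. N \<le> n \<Longrightarrow> norm (f n / real n - L) < \<eta>"
    using LIMSEQ_D[OF assms] by blast
  have "(L - \<eta>) * real n \<le> f n \<and> f n \<le> (L + \<eta>) * real n" if "max N 1 \<le> n" for n
  proof -
    have "\<bar>f n / real n - L\<bar> < \<eta>" using N[of n] that by simp
    thus ?thesis using that by (simp add: field_simps abs_less_iff)
  qed
  thus ?thesis using that by blast
qed

lemma balance_outgrows_zero_runsI: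
  assumes "0 < \<gamma>"
    and "\<forall>\<^sub>F m in sequentially. \<forall>q. (\<forall>i<q. doubling_orbit x (m + i) < 1/2) \<longrightarrow>
      (\<forall>j\<ge>m. real q + \<gamma> * real m \<le> digit_balance x j)"
  shows "balance_outgrows_zero_runs x"
  unfolding balance_outgrows_zero_runs_def
proof
  fix M :: real
  obtain N where N: "\<And>m q j. N \<le> m \<Longrightarrow> \<forall>i<q. doubling_orbit x (m + i) < 1/2 \<Longrightarrow> m \<le> j \<Longrightarrow>
      real q + \<gamma> * real m \<le> digit_balance x j"
    using assms(2) unfolding eventually_sequentially by blast
  have margin: "M \<le> \<gamma> * real m" if "nat \<lceil>M / \<gamma>\<rceil> \<le> m" for m
  proof -
    have "M / \<gamma> \<le> of_int \<lceil>M / \<gamma>\<rceil>" by (rule le_of_int_ceiling)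
    also have "\<dots> \<le> of_int (int m)" using that unfolding of_int_le_iff by (simp add: nat_le_iff)
    finally show ?thesis using assms(1) by (simp add: divide_le_eq mult.commute)
  qed
  show "\<exists>N. \<forall>m\<ge>N. \<forall>q. (\<forall>i<q. doubling_orbit x (m + i) < 1/2) \<longrightarrow> (\<forall>j\<ge>m. M + real q \<le> digit_balance x j)"
  proof (intro exI[of _ "max N (nat \<lceil>M / \<gamma>\<rceil>)"] allI impI)
    fix m q j assume "max N (nat \<lceil>M / \<gamma>\<rceil>) \<le> m" "\<forall>i<q. doubling_orbit x (m + i) < 1/2" "m \<le> j"
    thus "M + real q \<le> digit_balance x j" using N[of m q j] margin[of m] by simp
  qed
qed

text \<open>A run of \<open>q\<close> zeros starting at \<open>m\<close> raises the balance by \<open>q\<close>, which the density bounds at \<open>m\<close>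
  and \<open>m + q\<close> only allow for \<open>q = O(\<eta> m)\<close>.\<close>

lemma balance_outgrows_zero_runs_of_density:
  assumes lim: "(\<lambda>n. digit_balance x n / real n) \<longlonglongrightarrow> L" and L: "0 < L" "L < 1"
  shows "balance_outgrows_zero_runs x"
proof (rule balance_outgrows_zero_runsI[of "L/2"])
  define \<eta> where "\<eta> = L * (1 - L) / 16"
  have "L * (1 - L) \<le> 1 * (1 - L)" "L * (1 - L) \<le> L * 1" "0 < L * (1 - L)"
    using L by (intro mult_mono mult_pos_pos; simp)+
  hence \<eta>: "0 < \<eta>" "\<eta> \<le> L/4" "\<eta> \<le> (1 - L) / 2" using L \<eta>_def by linarith+
  obtain N where N: "\<And>n. N \<le> n \<Longrightarrow> (L - \<eta>) * real n \<le> digit_balance x n \<and> digit_balance x n \<le> (L + \<eta>) * real n"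
    using ratio_limit_bounds[OF lim \<eta>(1)] by blast
  show "\<forall>\<^sub>F m in sequentially. \<forall>q. (\<forall>i<q. doubling_orbit x (m + i) < 1/2) \<longrightarrow>
      (\<forall>j\<ge>m. real q + L / 2 * real m \<le> digit_balance x j)"
    unfolding eventually_sequentially
  proof (intro exI[of _ N] allI impI)
    fix m q j assume m: "N \<le> m" and run: "\<forall>i<q. doubling_orbit x (m + i) < 1/2" and j: "m \<le> j"
    have "real q \<le> (L + \<eta>) * (real m + real q) - (L - \<eta>) * real m"
      using digit_balance_zero_run[OF run] N[of m] N[of "m + q"] m by simp
    hence "real q * (1 - L - \<eta>) \<le> 2 * \<eta> * real m" by (simp add: algebra_simps)
    moreover have "real q * ((1 - L) / 2) \<le> real q * (1 - L - \<eta>)"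
      using \<eta> by (intro mult_left_mono) auto
    ultimately have "real q * ((1 - L) / 2) \<le> (L * (1 - L) / 8) * real m" unfolding \<eta>_def by simp
    hence "real q * (1 - L) \<le> (L * real m / 4) * (1 - L)" by (simp add: field_simps)
    hence q: "real q \<le> L * real m / 4" using L by (simp add: mult_le_cancel_right)
    have "(L - \<eta>) * real m \<le> (L - \<eta>) * real j" using j \<eta> by (intro mult_left_mono) auto
    moreover have "(3 * L / 4) * real m \<le> (L - \<eta>) * real m" using \<eta> by (intro mult_right_mono) auto
    ultimately have "(3 * L / 4) * real m \<le> digit_balance x j" using N[of j] m j by simp
    thus "real q + L / 2 * real m \<le> digit_balance x j" using q by simp
  qed
qed (use L in simp)

lemma strict_mono_bracket:
  fixes a :: "nat \<Rightarrow> nat"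
  assumes a: "strict_mono a" and m: "a i0 \<le> m"
  obtains i where "i0 \<le> i" "a i \<le> m" "m < a (Suc i)"
proof -
  define l where "l = (LEAST l. m < a l)"
  have "\<exists>l. m < a l" using strict_mono_imp_increasing[OF a, of "Suc m"] by (intro exI[of _ "Suc m"]) simp
  hence l: "m < a l" unfolding l_def by (rule LeastI_ex)
  have "a 0 \<le> m" using a m by (meson le_trans strict_mono_less_eq zero_le)
  hence "l \<noteq> 0" using l by (intro notI) simp
  then obtain i where i: "l = Suc i" using not0_implies_Suc by blast
  have "a i \<le> m" using not_less_Least[of i "\<lambda>l. m < a l"] i unfolding l_def by simp
  moreover have "i0 \<le> i"
  proof (rule ccontr)
    assume "\<not> i0 \<le> i"
    hence "a (Suc i) \<le> a i0" using a by (simp add: strict_mono_less_eq)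
    thus False using l i m by simp
  qed
  ultimately show ?thesis using that l i by simp
qed

text \<open>With gaps \<open>a (i + 1) < c * a i\<close>, \<open>c < 2\<close>, a run of zeros after a one at position \<open>a i\<close> is
  shorter than \<open>(c - 1) * a i\<close>, while density 1 of the balance makes it grow almost like \<open>n\<close>.\<close>

lemma balance_outgrows_zero_runs_of_gaps:
  fixes a :: "nat \<Rightarrow> nat"
  assumes lim: "(\<lambda>n. digit_balance x n / real n) \<longlonglongrightarrow> 1" and a: "strict_mono a"
    and digits: "\<And>k. Suc k \<in> range a \<longleftrightarrow> 1/2 < doubling_orbit x k"
    and c: "c < 2" and gaps: "\<forall>\<^sub>F i in sequentially. real (a (Suc i)) < c * real (a i)"
  shows "balance_outgrows_zero_runs x"
proof -
  define \<kappa> where "\<kappa> = min 1 (2 - c)"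
  have \<kappa>: "0 < \<kappa>" "\<kappa> \<le> 1" "c \<le> 2 - \<kappa>" using c unfolding \<kappa>_def by auto
  have \<kappa>2: "0 < \<kappa>/2" using \<kappa> by simp
  obtain N where N: "\<And>n. N \<le> n \<Longrightarrow>
      (1 - \<kappa>/2) * real n \<le> digit_balance x n \<and> digit_balance x n \<le> (1 + \<kappa>/2) * real n"
    using ratio_limit_bounds[OF lim \<kappa>2] by blast
  obtain i0 where i0: "\<And>i. i0 \<le> i \<Longrightarrow> real (a (Suc i)) < c * real (a i)"
    using gaps unfolding eventually_sequentially by blast
  show ?thesis
  proof (rule balance_outgrows_zero_runsI[of "\<kappa>/2"])
    show "\<forall>\<^sub>F m in sequentially. \<forall>q. (\<forall>i<q. doubling_orbit x (m + i) < 1/2) \<longrightarrow>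
        (\<forall>j\<ge>m. real q + \<kappa> / 2 * real m \<le> digit_balance x j)"
      unfolding eventually_sequentially
    proof (intro exI[of _ "max N (a i0)"] allI impI)
      fix m q j assume m: "max N (a i0) \<le> m" and run: "\<forall>i<q. doubling_orbit x (m + i) < 1/2"
        and j: "m \<le> j"
      obtain i where i: "i0 \<le> i" "a i \<le> m" "m < a (Suc i)"
        using strict_mono_bracket[OF a, of i0 m] m by auto
      have "m + q < a (Suc i)"
      proof (rule ccontr)
        assume "\<not> m + q < a (Suc i)"
        define k where "k = a (Suc i) - Suc m"
        have k: "k < q" "Suc (m + k) = a (Suc i)" using i(3) \<open>\<not> m + q < a (Suc i)\<close> unfolding k_def by auto
        have "Suc (m + k) \<in> range a" unfolding k(2) by (rule rangeI)
        hence "1/2 < doubling_orbit x (m + k)" using digits[of "m + k"] by simp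
        thus False using run k(1) by force
      qed
      hence "real m + real q < real (a (Suc i))" by linarith
      also have "real (a (Suc i)) < c * real (a i)" using i0 i(1) by blast
      also have "\<dots> \<le> (2 - \<kappa>) * real m" using \<kappa> c i(2) by (intro mult_mono) auto
      finally have "real q < (1 - \<kappa>) * real m" by (simp add: algebra_simps)
      moreover have "(1 - \<kappa>/2) * real m \<le> (1 - \<kappa>/2) * real j" using j \<kappa> by (intro mult_left_mono) auto
      moreover have "(1 - \<kappa>/2) * real j \<le> digit_balance x j" using N[of j] m j by simp
      ultimately show "real q + \<kappa> / 2 * real m \<le> digit_balance x j" by (simp add: algebra_simps)
    qed
  qed (use \<kappa> in simp)
qed

lemma eventually_less_of_limsup_less:
  fixes f :: "nat \<Rightarrow> real"
  assumes "limsup (\<lambda>n. ereal (f n)) < ereal C"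
  obtains c where "c < C" "\<forall>\<^sub>F n in sequentially. f n < c"
proof -
  obtain z where z: "limsup (\<lambda>n. ereal (f n)) < ereal z" "ereal z < ereal C"
    using ereal_dense2[OF assms] by blast
  have "\<forall>\<^sub>F n in sequentially. ereal (f n) < ereal z" by (rule Limsup_lessD[OF z(1)])
  thus ?thesis using that[of z] z(2) by simp
qed

lemma digit_balance_density:
  fixes e :: "nat \<Rightarrow> nat"
  assumes x: "nondyadic_orbit x" and e: "\<forall>k\<ge>1. e k \<in> {0, 1}"
    and sums: "(\<lambda>k. real (e (Suc k)) / 2 ^ Suc k) sums x"
    and lim: "(\<lambda>n. (\<Sum>k=1..n. real (e k)) / real n) \<longlonglongrightarrow> d"
  shows "(\<lambda>n. digit_balance x n / real n) \<longlonglongrightarrow> 1 - 2 * d"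
proof -
  have balance: "digit_balance x n = real n - 2 * (\<Sum>k=1..n. real (e k))" for n
    by (rule digit_balance_eq_digit_sum[OF x e binary_digit_iff_doubling_orbit[OF x e sums]])
  have "(\<lambda>n. 1 - 2 * ((\<Sum>k=1..n. real (e k)) / real n)) \<longlonglongrightarrow> 1 - 2 * d"
    by (intro tendsto_intros lim)
  moreover have "\<forall>\<^sub>F n in sequentially. 1 - 2 * ((\<Sum>k=1..n. real (e k)) / real n) = digit_balance x n / real n"
    unfolding eventually_sequentially balance by (intro exI[of _ 1]) (auto simp: field_simps)
  ultimately show ?thesis by (rule Lim_transform_eventually)
qed

theorem takagi_slope_at_top_of_digit_density:
  fixes x d :: real and e a :: "nat \<Rightarrow> nat"
  assumes x: "0 < x" "x < 1" "\<not> dyadic x"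
    and e: "\<forall>k\<ge>1. e k \<in> {0, 1}" "(\<lambda>k. real (e (Suc k)) / 2 ^ Suc k) sums x"
    and a: "strict_mono a" "\<forall>n. 1 \<le> a n" "(\<lambda>n. (1/2) ^ a n) sums x"
    and lim: "(\<lambda>n. (\<Sum>k=1..n. real (e k)) / real n) \<longlonglongrightarrow> d"
    and density: "(0 < d \<and> d < 1/2) \<or> (d = 0 \<and> limsup (\<lambda>n. ereal (real (a (Suc n)) / real (a n))) < 2)"
  shows "filterlim (\<lambda>h. (takagi (x + h) - takagi x) / h) at_top (at 0)"
proof -
  have orbit: "nondyadic_orbit x" by (rule nondyadic_orbit_of_not_dyadic[OF x])
  have balance: "(\<lambda>n. digit_balance x n / real n) \<longlonglongrightarrow> 1 - 2 * d"
    by (rule digit_balance_density[OF orbit e lim])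
  have "balance_outgrows_zero_runs x"
  proof (cases "0 < d \<and> d < 1/2")
    case True
    thus ?thesis using balance_outgrows_zero_runs_of_density[OF balance] by simp
  next
    case False
    hence d: "d = 0" and gaps: "limsup (\<lambda>n. ereal (real (a (Suc n)) / real (a n))) < ereal 2"
      using density by auto
    obtain c where c: "c < 2" "\<forall>\<^sub>F n in sequentially. real (a (Suc n)) / real (a n) < c"
      by (rule eventually_less_of_limsup_less[OF gaps])
    have "\<forall>\<^sub>F n in sequentially. real (a (Suc n)) < c * real (a n)"
      using c(2) by eventually_elim (use a(2) in \<open>auto simp: divide_less_eq Suc_le_eq\<close>)
    thus ?thesis
      using balance_outgrows_zero_runs_of_gaps[OF _ a(1) range_iff_doubling_orbit[OF orbit a] c(1)] balance d
      by simp
  qed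
  thus ?thesis by (rule takagi_slope_tendsto_at_top[OF orbit])
qed

lemma takagi_slope_at_bot_of_one_minus:
  assumes "filterlim (\<lambda>h. (takagi (1 - x + h) - takagi (1 - x)) / h) at_top (at 0)"
  shows "filterlim (\<lambda>h. (takagi (x + h) - takagi x) / h) at_bot (at 0)"
proof -
  have "filterlim uminus (at 0) (at (0::real))" by (simp add: filterlim_def filtermap_at_minus)
  hence "filterlim (\<lambda>h. (takagi (1 - x + - h) - takagi (1 - x)) / - h) at_top (at 0)"
    by (rule filterlim_compose[OF assms])
  moreover have "takagi (1 - x + - h) = takagi (x + h)" for h
    using takagi_one_minus[of "x + h"] by (simp add: algebra_simps)
  ultimately show ?thesis by (simp add: filterlim_uminus_at_bot takagi_one_minus)
qed

lemma not_dyadic_one_minus: "\<not> dyadic x \<Longrightarrow> \<not> dyadic (1 - x)"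
  unfolding dyadic_def
proof (elim contrapos_nn exE)
  fix k :: int and m :: nat assume "1 - x = of_int k / 2 ^ m"
  hence "x = of_int (2 ^ m - k) / 2 ^ m" by (simp add: field_simps)
  thus "\<exists>(k::int) (m::nat). x = of_int k / 2 ^ m" by blast
qed

lemma complement_digits:
  fixes e :: "nat \<Rightarrow> nat"
  assumes e: "\<forall>k\<ge>1. e k \<in> {0, 1}" and sums: "(\<lambda>k. real (e (Suc k)) / 2 ^ Suc k) sums x"
    and lim: "(\<lambda>n. (\<Sum>k=1..n. real (e k)) / real n) \<longlonglongrightarrow> d"
  shows "\<forall>k\<ge>1. 1 - e k \<in> {0, 1}"
    and "(\<lambda>k. real (1 - e (Suc k)) / 2 ^ Suc k) sums (1 - x)"
    and "(\<lambda>n. (\<Sum>k=1..n. real (1 - e k)) / real n) \<longlonglongrightarrow> 1 - d"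
proof -
  have flip: "real (1 - e k) = 1 - real (e k)" if "1 \<le> k" for k using e that by auto
  show "\<forall>k\<ge>1. 1 - e k \<in> {0, 1}" using e by auto
  have "(\<lambda>k. (1/2::real) ^ Suc k - real (e (Suc k)) / 2 ^ Suc k) sums (1 - x)"
    by (rule sums_diff[OF power_half_series sums])
  moreover have "(\<lambda>k. (1/2::real) ^ Suc k - real (e (Suc k)) / 2 ^ Suc k) = (\<lambda>k. real (1 - e (Suc k)) / 2 ^ Suc k)"
    using flip by (auto simp: power_one_over diff_divide_distrib)
  ultimately show "(\<lambda>k. real (1 - e (Suc k)) / 2 ^ Suc k) sums (1 - x)" by simp
  have "(\<Sum>k=1..n. real (1 - e k)) = (\<Sum>k=1..n. 1 - real (e k))" for n
    by (intro sum.cong refl flip) simp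
  hence sum: "(\<Sum>k=1..n. real (1 - e k)) = real n - (\<Sum>k=1..n. real (e k))" for n
    by (simp add: sum_subtractf)
  have "(\<lambda>n. 1 - (\<Sum>k=1..n. real (e k)) / real n) \<longlonglongrightarrow> 1 - d" by (intro tendsto_intros lim)
  moreover have "\<forall>\<^sub>F n in sequentially. 1 - (\<Sum>k=1..n. real (e k)) / real n = (\<Sum>k=1..n. real (1 - e k)) / real n"
    unfolding eventually_sequentially sum by (intro exI[of _ 1]) (auto simp: field_simps)
  ultimately show "(\<lambda>n. (\<Sum>k=1..n. real (1 - e k)) / real n) \<longlonglongrightarrow> 1 - d"
    by (rule Lim_transform_eventually)
qed

theorem corollary2:
  fixes x d :: real and eps :: "nat \<Rightarrow> nat" and a b :: "nat \<Rightarrow> nat"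
  assumes x_in: "0 < x" "x < 1"
    and nondyadic: "\<not> dyadic x"
    and eps_digits: "\<forall>k\<ge>1. eps k \<in> {0, 1}"
    and eps_sums: "(\<lambda>k. real (eps (Suc k)) / 2 ^ Suc k) sums x"
    and a_mono: "strict_mono a" and a_pos: "\<forall>n. a n \<ge> 1"
    and a_sums: "(\<lambda>n. (1/2) ^ a n) sums x"
    and b_mono: "strict_mono b" and b_pos: "\<forall>n. b n \<ge> 1"
    and b_sums: "(\<lambda>n. (1/2) ^ b n) sums (1 - x)"
    and d1: "(\<lambda>n. (\<Sum>k=1..n. real (eps k)) / real n) \<longlonglongrightarrow> d"
  shows "(((0 < d \<and> d < 1/2) \<or>
           (d = 0 \<and> limsup (\<lambda>n. ereal (real (a (Suc n)) / real (a n))) < 2))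
          \<longrightarrow> filterlim (\<lambda>h. (takagi (x + h) - takagi x) / h) at_top (at 0))
        \<and> (((1/2 < d \<and> d < 1) \<or>
           (d = 1 \<and> limsup (\<lambda>n. ereal (real (b (Suc n)) / real (b n))) < 2))
          \<longrightarrow> filterlim (\<lambda>h. (takagi (x + h) - takagi x) / h) at_bot (at 0))"
proof (intro conjI impI)
  assume "(0 < d \<and> d < 1/2) \<or> (d = 0 \<and> limsup (\<lambda>n. ereal (real (a (Suc n)) / real (a n))) < 2)"
  thus "filterlim (\<lambda>h. (takagi (x + h) - takagi x) / h) at_top (at 0)"
    using takagi_slope_at_top_of_digit_density[OF x_in nondyadic eps_digits eps_sums a_mono _ a_sums d1]
      a_pos by simp
next
  assume "(1/2 < d \<and> d < 1) \<or> (d = 1 \<and> limsup (\<lambda>n. ereal (real (b (Suc n)) / real (b n))) < 2)"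
  hence "(0 < 1 - d \<and> 1 - d < 1/2) \<or> (1 - d = 0 \<and> limsup (\<lambda>n. ereal (real (b (Suc n)) / real (b n))) < 2)"
    by auto
  hence "filterlim (\<lambda>h. (takagi (1 - x + h) - takagi (1 - x)) / h) at_top (at 0)"
    using takagi_slope_at_top_of_digit_density[OF _ _ not_dyadic_one_minus[OF nondyadic]
        complement_digits(1,2)[OF eps_digits eps_sums d1] b_mono _ b_sums
        complement_digits(3)[OF eps_digits eps_sums d1]] x_in b_pos
    by simp
  thus "filterlim (\<lambda>h. (takagi (x + h) - takagi x) / h) at_bot (at 0)"
    by (rule takagi_slope_at_bot_of_one_minus)
qed

end
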